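(* Let $\Omega\subset\mathbb{R}^d$, $d\le3$, be a bounded polytopal domain with Lipschitz boundary, $\tau>0$, $w\in H^1_0(\Omega)$ and $\psi\in W^{2,\infty}(\Omega)$. Define \[ \mathcal{A}(w,v):=(w,v)+\tau\big(a(w,v)+b(w,v)\big), \] with $a(w,v):=\int_\Omega\nabla w\cdot\nabla v\,\mathrm{d}x$ and $b(w,v):=\int_\Omega (w\nabla\psi)\cdot\nabla v\,\mathrm{d}x$. If $\Delta\psi\le0$, then \[ \mathcal{A}(w,w)\ge\|w\|_{L^2(\Omega)}^2+\tau\|\nabla w\|_{L^2(\Omega)}^2. \] Alternatively, without any sign assumption on $\Delta\psi$, if \[ \tau<\frac{4}{C_S^2\|\Delta\psi\|_{L^3(\Omega)}^2}, \] then \[ \mathcal{A}(w,w)\ge\tfrac12\|w\|_{L^2(\Omega)}^2+\tfrac{\tau}{2}\|\nabla w\|_{L^2(\Omega)}^2. \]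
   Context: $(\cdot,\cdot)$ is the $L^2(\Omega)$ inner product. $C_S$ is the constant of the Sobolev embedding $H^1_0(\Omega)\hookrightarrow L^6(\Omega)$ (valid for $d\le3$), i.e. $\|v\|_{L^6(\Omega)}\le C_S\|\nabla v\|_{L^2(\Omega)}$ for all $v\in H^1_0(\Omega)$. *)

theory Defs
  imports "HOL-Analysis.Analysis"
begin

definition lipschitz_boundary :: "'a::euclidean_space set \<Rightarrow> bool" where
  "lipschitz_boundary \<Omega> \<longleftrightarrow>
     (\<forall>x\<in>frontier \<Omega>. \<exists>r>0. \<exists>e L g. norm e = 1 \<and>
        L-lipschitz_on {z. z \<bullet> e = 0} (g :: 'a \<Rightarrow> real) \<and>
        (\<forall>y\<in>ball x r. y \<in> \<Omega> \<longleftrightarrow> y \<bullet> e < g (y - (y \<bullet> e) *\<^sub>R e)))"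

definition bounded_polytopal_domain :: "'a::euclidean_space set \<Rightarrow> bool" where
  "bounded_polytopal_domain \<Omega> \<longleftrightarrow> open \<Omega> \<and> connected \<Omega> \<and> \<Omega> \<noteq> {} \<and> bounded \<Omega> \<and>
     (\<exists>P. finite P \<and> (\<forall>p\<in>P. polytope p) \<and> closure \<Omega> = \<Union>P)"

coinductive C_inf :: "('a::euclidean_space \<Rightarrow> real) \<Rightarrow> bool" where
  "(\<forall>x. f differentiable (at x)) \<Longrightarrow> continuous_on UNIV f \<Longrightarrow>
   (\<forall>i\<in>Basis. C_inf (\<lambda>x. frechet_derivative f (at x) i)) \<Longrightarrow> C_inf f"

definition grad :: "('a::euclidean_space \<Rightarrow> real) \<Rightarrow> 'a \<Rightarrow> 'a" where
  "grad f x = (\<Sum>i\<in>Basis. frechet_derivative f (at x) i *\<^sub>R i)"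

definition test_fun :: "'a::euclidean_space set \<Rightarrow> ('a \<Rightarrow> real) \<Rightarrow> bool" where
  "test_fun \<Omega> \<phi> \<longleftrightarrow> C_inf \<phi> \<and> compact (closure {x. \<phi> x \<noteq> 0}) \<and> closure {x. \<phi> x \<noteq> 0} \<subseteq> \<Omega>"

definition L2 :: "'a::euclidean_space set \<Rightarrow> ('a \<Rightarrow> 'b::euclidean_space) \<Rightarrow> bool" where
  "L2 \<Omega> f \<longleftrightarrow> f \<in> borel_measurable (restrict_space lebesgue \<Omega>) \<and>
     set_integrable lebesgue \<Omega> (\<lambda>x. (norm (f x))\<^sup>2)"

definition ess_bounded :: "'a::euclidean_space set \<Rightarrow> ('a \<Rightarrow> 'b::euclidean_space) \<Rightarrow> bool" where
  "ess_bounded \<Omega> f \<longleftrightarrow> f \<in> borel_measurable (restrict_space lebesgue \<Omega>) \<and>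
     (\<exists>C. AE x in lebesgue. x \<in> \<Omega> \<longrightarrow> norm (f x) \<le> C)"

definition locally_integrable :: "'a::euclidean_space set \<Rightarrow> ('a \<Rightarrow> 'b::euclidean_space) \<Rightarrow> bool" where
  "locally_integrable \<Omega> f \<longleftrightarrow> (\<forall>K. compact K \<and> K \<subseteq> \<Omega> \<longrightarrow> set_integrable lebesgue K f)"

definition weak_grad :: "'a::euclidean_space set \<Rightarrow> ('a \<Rightarrow> real) \<Rightarrow> ('a \<Rightarrow> 'a) \<Rightarrow> bool" where
  "weak_grad \<Omega> w G \<longleftrightarrow> locally_integrable \<Omega> w \<and> locally_integrable \<Omega> G \<and>
     (\<forall>\<phi>. test_fun \<Omega> \<phi> \<longrightarrow> (\<forall>i\<in>Basis.
        (LINT x:\<Omega>|lebesgue. w x * (grad \<phi> x \<bullet> i)) = - (LINT x:\<Omega>|lebesgue. (G x \<bullet> i) * \<phi> x)))"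

definition H10 :: "'a::euclidean_space set \<Rightarrow> ('a \<Rightarrow> real) \<Rightarrow> ('a \<Rightarrow> 'a) \<Rightarrow> bool" where
  "H10 \<Omega> w G \<longleftrightarrow> L2 \<Omega> w \<and> L2 \<Omega> G \<and>
     (\<exists>\<phi>::nat \<Rightarrow> 'a \<Rightarrow> real. (\<forall>n. test_fun \<Omega> (\<phi> n)) \<and>
        ((\<lambda>n. LINT x:\<Omega>|lebesgue. (\<phi> n x - w x)\<^sup>2) \<longlonglongrightarrow> 0) \<and>
        ((\<lambda>n. LINT x:\<Omega>|lebesgue. (norm (grad (\<phi> n) x - G x))\<^sup>2) \<longlonglongrightarrow> 0))"

text \<open>\<psi> \<in> W^{2,\<infinity>}(\<Omega>) with weak gradient G and weak Hessian H
  (H x i is the weak gradient of the i-th component of G).\<close>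
definition W2inf :: "'a::euclidean_space set \<Rightarrow> ('a \<Rightarrow> real) \<Rightarrow> ('a \<Rightarrow> 'a) \<Rightarrow> ('a \<Rightarrow> 'a \<Rightarrow> 'a) \<Rightarrow> bool" where
  "W2inf \<Omega> \<psi> G H \<longleftrightarrow> ess_bounded \<Omega> \<psi> \<and> ess_bounded \<Omega> G \<and> weak_grad \<Omega> \<psi> G \<and>
     (\<forall>i\<in>Basis. ess_bounded \<Omega> (\<lambda>x. H x i) \<and> weak_grad \<Omega> (\<lambda>x. G x \<bullet> i) (\<lambda>x. H x i))"

definition lap :: "('a::euclidean_space \<Rightarrow> 'a \<Rightarrow> 'a) \<Rightarrow> 'a \<Rightarrow> real" where
  "lap H x = (\<Sum>i\<in>Basis. H x i \<bullet> i)"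

definition L2_inner :: "'a::euclidean_space set \<Rightarrow> ('a \<Rightarrow> real) \<Rightarrow> ('a \<Rightarrow> real) \<Rightarrow> real" where
  "L2_inner \<Omega> w v = (LINT x:\<Omega>|lebesgue. w x * v x)"

definition Lp_norm :: "'a::euclidean_space set \<Rightarrow> real \<Rightarrow> ('a \<Rightarrow> 'b::euclidean_space) \<Rightarrow> real" where
  "Lp_norm \<Omega> p f = (LINT x:\<Omega>|lebesgue. norm (f x) powr p) powr (1 / p)"

definition form_a :: "'a::euclidean_space set \<Rightarrow> ('a \<Rightarrow> 'a) \<Rightarrow> ('a \<Rightarrow> 'a) \<Rightarrow> real" where
  "form_a \<Omega> Gw Gv = (LINT x:\<Omega>|lebesgue. Gw x \<bullet> Gv x)"

definition form_b :: "'a::euclidean_space set \<Rightarrow> ('a \<Rightarrow> 'a) \<Rightarrow> ('a \<Rightarrow> real) \<Rightarrow> ('a \<Rightarrow> 'a) \<Rightarrow> real" where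
  "form_b \<Omega> G\<psi> w Gv = (LINT x:\<Omega>|lebesgue. (w x *\<^sub>R G\<psi> x) \<bullet> Gv x)"

definition form_A :: "'a::euclidean_space set \<Rightarrow> real \<Rightarrow> ('a \<Rightarrow> 'a) \<Rightarrow>
    ('a \<Rightarrow> real) \<Rightarrow> ('a \<Rightarrow> 'a) \<Rightarrow> ('a \<Rightarrow> real) \<Rightarrow> ('a \<Rightarrow> 'a) \<Rightarrow> real" where
  "form_A \<Omega> \<tau> G\<psi> w Gw v Gv = L2_inner \<Omega> w v + \<tau> * (form_a \<Omega> Gw Gv + form_b \<Omega> G\<psi> w Gv)"

end

theory Submission
  imports Defs
begin

text \<open>
  For a test function \<open>\<phi>\<close>, testing the weak derivative of \<open>\<partial>\<^sub>i\<psi>\<close> against \<open>\<phi>\<^sup>2\<close> and summing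
  over \<open>i\<close> gives \<open>b(\<phi>,\<phi>) = \<integral> \<phi> \<nabla>\<psi>\<cdot>\<nabla>\<phi> = \<integral> \<nabla>\<psi>\<cdot>\<nabla>(\<phi>\<^sup>2) / 2 = - \<integral> \<Delta>\<psi> \<phi>\<^sup>2 / 2\<close>. Since
  \<open>\<nabla>\<psi>\<close> and \<open>\<Delta>\<psi>\<close> are bounded, both sides are continuous for the \<open>H\<^sup>1\<close> norm, so by density
  \<open>b(w,w) = - \<integral> \<Delta>\<psi> w\<^sup>2 / 2\<close> for \<open>w \<in> H\<^sup>1\<^sub>0\<close>, i.e.
  \<open>\<A>(w,w) = \<parallel>w\<parallel>\<^sup>2 + \<tau> \<parallel>\<nabla>w\<parallel>\<^sup>2 - \<tau>/2 \<integral> \<Delta>\<psi> w\<^sup>2\<close>.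
  If \<open>\<Delta>\<psi> \<le> 0\<close> the last term is nonnegative. Otherwise Hoelder's inequality with exponents
  3, 6, 2 and the Sobolev inequality give \<open>|\<integral> \<Delta>\<psi> w\<^sup>2| \<le> K \<parallel>w\<parallel> \<parallel>\<nabla>w\<parallel>\<close> with
  \<open>K = C\<^sub>S \<parallel>\<Delta>\<psi>\<parallel>\<^sub>L\<^sub>3\<close>, and \<open>\<tau> K\<^sup>2 < 4\<close> is exactly the condition under which
  \<open>\<tau> K a b \<le> a\<^sup>2 + \<tau> b\<^sup>2\<close>, so the mixed term is absorbed by half of the leading terms.
\<close>

section \<open>Products of smooth functions\<close>

abbreviation partial :: "'a::euclidean_space \<Rightarrow> ('a \<Rightarrow> real) \<Rightarrow> 'a \<Rightarrow> real" where
  "partial i f \<equiv> \<lambda>x. frechet_derivative f (at x) i"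

lemma C_inf_differentiable: "C_inf f \<Longrightarrow> f differentiable (at x)"
  by (auto elim: C_inf.cases)

lemma C_inf_continuous_on: "C_inf f \<Longrightarrow> continuous_on UNIV f"
  by (auto elim: C_inf.cases)

lemma C_inf_partial: "C_inf f \<Longrightarrow> i \<in> Basis \<Longrightarrow> C_inf (partial i f)"
  by (auto elim: C_inf.cases)

text \<open>
  Products of \<^const>\<open>C_inf\<close> functions are not closed under partial derivatives, but finite
  sums of such products are; these sums are the invariant for the coinduction.
\<close>

definition smooth_pairs :: "(('a::euclidean_space \<Rightarrow> real) \<times> ('a \<Rightarrow> real)) list \<Rightarrow> bool" where
  "smooth_pairs L \<longleftrightarrow> (\<forall>(f, g)\<in>set L. C_inf f \<and> C_inf g)"

definition sum_prods :: "(('a \<Rightarrow> real) \<times> ('a \<Rightarrow> real)) list \<Rightarrow> 'a \<Rightarrow> real" where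
  "sum_prods L x = (\<Sum>(f, g)\<leftarrow>L. f x * g x)"

definition partial_pairs :: "'a::euclidean_space \<Rightarrow> (('a \<Rightarrow> real) \<times> ('a \<Rightarrow> real)) list \<Rightarrow>
    (('a \<Rightarrow> real) \<times> ('a \<Rightarrow> real)) list" where
  "partial_pairs i L = concat (map (\<lambda>(f, g). [(f, partial i g), (partial i f, g)]) L)"

lemma has_derivative_sum_prods:
  assumes "smooth_pairs L"
  shows "(sum_prods L has_derivative (\<lambda>v. sum_prods (partial_pairs v L) x)) (at x)"
  using assms
proof (induction L)
  case Nil
  then show ?case by (simp add: sum_prods_def partial_pairs_def)
next
  case (Cons p L)
  obtain f g where p: "p = (f, g)" by fastforce
  have "(f has_derivative frechet_derivative f (at x)) (at x)"
       "(g has_derivative frechet_derivative g (at x)) (at x)"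
    using Cons.prems C_inf_differentiable frechet_derivative_works
    unfolding smooth_pairs_def p by auto
  from has_derivative_mult[OF this] have
    "((\<lambda>y. f y * g y) has_derivative (\<lambda>v. f x * partial v g x + partial v f x * g x)) (at x)" .
  moreover have "smooth_pairs L" using Cons.prems by (simp add: smooth_pairs_def)
  ultimately show ?case
    using has_derivative_add Cons.IH
    by (fastforce simp: p sum_prods_def partial_pairs_def add.assoc)
qed

lemma partial_sum_prods:
  assumes "smooth_pairs L"
  shows "partial i (sum_prods L) = sum_prods (partial_pairs i L)"
proof
  fix x
  show "partial i (sum_prods L) x = sum_prods (partial_pairs i L) x"
    using frechet_derivative_at[OF has_derivative_sum_prods[OF assms, of x]] by metis
qed

lemma smooth_pairs_partial_pairs:
  "smooth_pairs L \<Longrightarrow> i \<in> Basis \<Longrightarrow> smooth_pairs (partial_pairs i L)"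
  by (auto simp: smooth_pairs_def partial_pairs_def intro: C_inf_partial)

lemma C_inf_sum_prods:
  assumes "smooth_pairs L"
  shows "C_inf (sum_prods L)"
  using assms
proof (coinduction arbitrary: L rule: C_inf.coinduct)
  case (C_inf L)
  have diff: "sum_prods L differentiable (at x)" for x
    using has_derivative_sum_prods[OF C_inf] by (auto simp: differentiable_def)
  then have "continuous_on UNIV (sum_prods L)"
    by (simp add: differentiable_imp_continuous_on differentiable_on_def)
  with diff show ?case
    using partial_sum_prods[OF C_inf] smooth_pairs_partial_pairs[OF C_inf] by auto
qed

lemma C_inf_mult:
  assumes "C_inf f" "C_inf g"
  shows "C_inf (\<lambda>x. f x * g x)"
  using C_inf_sum_prods[of "[(f, g)]"] assms by (simp add: smooth_pairs_def sum_prods_def[abs_def])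

lemma continuous_on_grad: "C_inf f \<Longrightarrow> continuous_on UNIV (grad f)"
  unfolding grad_def[abs_def]
  by (intro continuous_intros) (auto intro: C_inf_continuous_on C_inf_partial)

lemma grad_mult_self:
  assumes "C_inf f"
  shows "grad (\<lambda>x. f x * f x) x = (2 * f x) *\<^sub>R grad f x"
proof -
  have "(f has_derivative frechet_derivative f (at x)) (at x)"
    using C_inf_differentiable[OF assms] frechet_derivative_works by blast
  from has_derivative_mult[OF this this] have
    "frechet_derivative (\<lambda>x. f x * f x) (at x) = (\<lambda>v. f x * partial v f x + partial v f x * f x)"
    by (rule frechet_derivative_at[symmetric])
  then show ?thesis
    by (simp add: grad_def scaleR_sum_right algebra_simps)
qed

lemma scaleR_inner_grad_eq_half_grad_square:
  assumes "C_inf f"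
  shows "(f x *\<^sub>R v) \<bullet> grad f x = (\<Sum>i\<in>Basis. (v \<bullet> i) * (grad (\<lambda>y. f y * f y) x \<bullet> i)) / 2"
proof -
  have "2 * ((f x *\<^sub>R v) \<bullet> grad f x) = v \<bullet> grad (\<lambda>y. f y * f y) x"
    by (simp add: grad_mult_self[OF assms])
  also have "\<dots> = (\<Sum>i\<in>Basis. (v \<bullet> i) * (grad (\<lambda>y. f y * f y) x \<bullet> i))"
    by (rule euclidean_inner)
  finally show ?thesis
    by simp
qed

lemma test_fun_mult_self: "test_fun \<Omega> f \<Longrightarrow> test_fun \<Omega> (\<lambda>x. f x * f x)"
  by (simp add: test_fun_def C_inf_mult)

section \<open>Essentially bounded and square-integrable functions\<close>

definition ae_bounded :: "'a measure \<Rightarrow> ('a \<Rightarrow> 'b::real_normed_vector) \<Rightarrow> bool" where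
  "ae_bounded M f \<longleftrightarrow> f \<in> borel_measurable M \<and> (\<exists>B. AE x in M. norm (f x) \<le> B)"

lemma ae_boundedE:
  assumes "ae_bounded M f"
  obtains B where "B \<ge> 0" "f \<in> borel_measurable M" "AE x in M. norm (f x) \<le> B"
proof -
  obtain B where "f \<in> borel_measurable M" and B: "AE x in M. norm (f x) \<le> B"
    using assms by (auto simp: ae_bounded_def)
  moreover from B have "AE x in M. norm (f x) \<le> max 0 B"
    by eventually_elim simp
  ultimately show thesis
    by (intro that[of "max 0 B"]) auto
qed

lemma ae_bounded_const: "ae_bounded M (\<lambda>x. c)"
  by (auto simp: ae_bounded_def)

lemma ae_bounded_add:
  fixes f g :: "'a \<Rightarrow> 'b::{real_normed_vector,second_countable_topology}"
  assumes "ae_bounded M f" "ae_bounded M g"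
  shows "ae_bounded M (\<lambda>x. f x + g x)"
proof -
  obtain B where [measurable]: "f \<in> borel_measurable M" and B: "AE x in M. norm (f x) \<le> B"
    using assms(1) by (rule ae_boundedE)
  obtain C where [measurable]: "g \<in> borel_measurable M" and C: "AE x in M. norm (g x) \<le> C"
    using assms(2) by (rule ae_boundedE)
  from B C have "AE x in M. norm (f x + g x) \<le> B + C"
    by eventually_elim (rule norm_triangle_mono)
  then show ?thesis
    unfolding ae_bounded_def by auto
qed

lemma ae_bounded_sum:
  fixes f :: "'i \<Rightarrow> 'a \<Rightarrow> 'b::{real_normed_vector,second_countable_topology}"
  shows "finite I \<Longrightarrow> (\<And>i. i \<in> I \<Longrightarrow> ae_bounded M (f i)) \<Longrightarrow> ae_bounded M (\<lambda>x. \<Sum>i\<in>I. f i x)"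
  by (induction I rule: finite_induct) (simp_all add: ae_bounded_const ae_bounded_add)

lemma ae_bounded_bilinear:
  fixes f :: "'a \<Rightarrow> 'b::{real_normed_vector,second_countable_topology}"
    and g :: "'a \<Rightarrow> 'c::{real_normed_vector,second_countable_topology}"
    and prod :: "'b \<Rightarrow> 'c \<Rightarrow> 'd::real_normed_vector"
  assumes prod: "bounded_bilinear prod" and "ae_bounded M f" "ae_bounded M g"
  shows "ae_bounded M (\<lambda>x. prod (f x) (g x))"
proof -
  obtain B where "B \<ge> 0" and f: "f \<in> borel_measurable M" and B: "AE x in M. norm (f x) \<le> B"
    using assms(2) by (rule ae_boundedE)
  obtain C where "C \<ge> 0" and g: "g \<in> borel_measurable M" and C: "AE x in M. norm (g x) \<le> C"
    using assms(3) by (rule ae_boundedE)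
  obtain K where K: "\<And>a b. norm (prod a b) \<le> norm a * norm b * K" "K \<ge> 0"
    using bounded_bilinear.nonneg_bounded[OF prod] by blast
  have bound: "norm (prod a b) \<le> B * C * K" if "norm a \<le> B" "norm b \<le> C" for a b
    using order_trans[OF K(1) mult_right_mono[OF mult_mono[OF that] K(2)]] \<open>B \<ge> 0\<close> by simp
  from B C have "AE x in M. norm (prod (f x) (g x)) \<le> B * C * K"
    by eventually_elim (rule bound)
  moreover have "continuous_on UNIV (\<lambda>z. prod (fst z) (snd z))"
    by (intro bounded_bilinear.continuous_on[OF prod] continuous_intros)
  then have "(\<lambda>x. prod (f x) (g x)) \<in> borel_measurable M"
    by (rule borel_measurable_continuous_Pair[OF f g])
  ultimately show ?thesis
    unfolding ae_bounded_def by blast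
qed

lemma ae_bounded_powr_norm:
  assumes "ae_bounded M f" "p \<ge> 0"
  shows "ae_bounded M (\<lambda>x. norm (f x) powr p)"
proof -
  obtain B where [measurable]: "f \<in> borel_measurable M" and B: "AE x in M. norm (f x) \<le> B"
    using assms(1) by (rule ae_boundedE)
  from B have "AE x in M. norm (norm (f x) powr p) \<le> B powr p"
    by eventually_elim (simp add: powr_mono2 assms(2))
  then show ?thesis
    unfolding ae_bounded_def by auto
qed

lemma ae_bounded_integrable:
  fixes f :: "'a \<Rightarrow> 'b::{banach,second_countable_topology}"
  shows "finite_measure M \<Longrightarrow> ae_bounded M f \<Longrightarrow> integrable M f"
  unfolding ae_bounded_def using finite_measure.integrable_const_bound by blast

lemma ae_bounded_lebesgue_on_continuous:
  assumes "bounded \<Omega>" "\<Omega> \<in> sets lebesgue" "continuous_on (closure \<Omega>) f"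
  shows "ae_bounded (lebesgue_on \<Omega>) f"
proof -
  have "compact (f ` closure \<Omega>)"
    using assms by (metis compact_closure compact_continuous_image)
  then obtain B where "\<And>x. x \<in> closure \<Omega> \<Longrightarrow> norm (f x) \<le> B"
    by (meson bounded_iff compact_imp_bounded imageI)
  then have "AE x in lebesgue_on \<Omega>. norm (f x) \<le> B"
    by (intro AE_I2) (auto simp: closure_subset[THEN subsetD])
  moreover have "f \<in> borel_measurable (lebesgue_on \<Omega>)"
    by (rule continuous_imp_measurable_on_sets_lebesgue[OF
          continuous_on_subset[OF assms(3) closure_subset] assms(2)])
  ultimately show ?thesis
    unfolding ae_bounded_def by blast
qed

definition square_integrable :: "'a measure \<Rightarrow> ('a \<Rightarrow> 'b::real_normed_vector) \<Rightarrow> bool" where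
  "square_integrable M f \<longleftrightarrow> f \<in> borel_measurable M \<and> integrable M (\<lambda>x. (norm (f x))\<^sup>2)"

lemma square_integrable_diff:
  fixes f g :: "'a \<Rightarrow> 'b::{real_normed_vector,second_countable_topology}"
  assumes "square_integrable M f" "square_integrable M g"
  shows "square_integrable M (\<lambda>x. f x - g x)"
proof -
  have [measurable]: "f \<in> borel_measurable M" "g \<in> borel_measurable M"
    and int: "integrable M (\<lambda>x. 2 * (norm (f x))\<^sup>2 + 2 * (norm (g x))\<^sup>2)"
    using assms by (simp_all add: square_integrable_def)
  have "(norm (f x - g x))\<^sup>2 \<le> 2 * (norm (f x))\<^sup>2 + 2 * (norm (g x))\<^sup>2" for x
  proof -
    have "(norm (f x - g x))\<^sup>2 \<le> (norm (f x) + norm (g x))\<^sup>2"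
      by (rule power_mono[OF norm_triangle_ineq4 norm_ge_zero])
    also have "\<dots> \<le> 2 * (norm (f x))\<^sup>2 + 2 * (norm (g x))\<^sup>2"
      using sum_squares_bound[of "norm (f x)" "norm (g x)"] unfolding power2_sum by linarith
    finally show ?thesis .
  qed
  then have "integrable M (\<lambda>x. (norm (f x - g x))\<^sup>2)"
    by (intro Bochner_Integration.integrable_bound[OF int] AE_I2) auto
  then show ?thesis
    by (simp add: square_integrable_def)
qed

lemma ae_bounded_square_integrable:
  fixes f :: "'a \<Rightarrow> 'b::{real_normed_vector,second_countable_topology}"
  assumes "finite_measure M" "ae_bounded M f"
  shows "square_integrable M f"
  using ae_bounded_integrable[OF assms(1) ae_bounded_powr_norm[OF assms(2), of 2]] assms(2)
  by (simp add: square_integrable_def ae_bounded_def)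

lemma square_integrable_inner_bounded:
  fixes G d :: "'a \<Rightarrow> 'b::euclidean_space"
  assumes [measurable]: "G \<in> borel_measurable M" and G: "AE x in M. norm (G x) \<le> B"
    and d: "square_integrable M d"
  shows "square_integrable M (\<lambda>x. G x \<bullet> d x)"
    and "(\<integral>x. (G x \<bullet> d x)\<^sup>2 \<partial>M) \<le> B\<^sup>2 * (\<integral>x. (norm (d x))\<^sup>2 \<partial>M)"
proof -
  have [measurable]: "d \<in> borel_measurable M" and d2: "integrable M (\<lambda>x. (norm (d x))\<^sup>2)"
    using d by (simp_all add: square_integrable_def)
  have "(a \<bullet> v)\<^sup>2 \<le> B\<^sup>2 * (norm v)\<^sup>2" if "norm a \<le> B" for a v :: 'b
  proof -
    have "\<bar>a \<bullet> v\<bar> \<le> B * norm v"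
      using Cauchy_Schwarz_ineq2[of a v] mult_right_mono[OF that norm_ge_zero, of v] by linarith
    then have "\<bar>a \<bullet> v\<bar>\<^sup>2 \<le> (B * norm v)\<^sup>2"
      by (rule power_mono) simp
    then show ?thesis
      by (simp add: power_mult_distrib)
  qed
  with G have pointwise: "AE x in M. (G x \<bullet> d x)\<^sup>2 \<le> B\<^sup>2 * (norm (d x))\<^sup>2"
    by (auto elim: eventually_mono)
  have int: "integrable M (\<lambda>x. (G x \<bullet> d x)\<^sup>2)"
    by (rule Bochner_Integration.integrable_bound[OF integrable_mult_right[OF d2, of "B\<^sup>2"]])
       (use pointwise in \<open>auto elim: eventually_mono\<close>)
  then show "square_integrable M (\<lambda>x. G x \<bullet> d x)"
    by (simp add: square_integrable_def)
  show "(\<integral>x. (G x \<bullet> d x)\<^sup>2 \<partial>M) \<le> B\<^sup>2 * (\<integral>x. (norm (d x))\<^sup>2 \<partial>M)"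
    using integral_mono_AE[OF int integrable_mult_right[OF d2] pointwise] by simp
qed

lemma square_integrable_inner_ae_bounded:
  fixes G d :: "'a \<Rightarrow> 'b::euclidean_space"
  assumes "ae_bounded M G" "square_integrable M d"
  shows "square_integrable M (\<lambda>x. G x \<bullet> d x)"
proof -
  obtain B where "G \<in> borel_measurable M" "AE x in M. norm (G x) \<le> B"
    using assms(1) by (rule ae_boundedE)
  then show ?thesis
    using square_integrable_inner_bounded(1) assms(2) by blast
qed

section \<open>Hoelder's inequality\<close>

definition Lp_norm_on :: "'a measure \<Rightarrow> real \<Rightarrow> ('a \<Rightarrow> 'b::real_normed_vector) \<Rightarrow> real" where
  "Lp_norm_on M p f = (\<integral>x. norm (f x) powr p \<partial>M) powr (1 / p)"

lemma Lp_norm_on_nonneg: "Lp_norm_on M p f \<ge> 0"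
  by (simp add: Lp_norm_on_def)

lemma Lp_norm_on_two: "Lp_norm_on M 2 f = sqrt (\<integral>x. (norm (f x))\<^sup>2 \<partial>M)"
  by (simp add: Lp_norm_on_def powr_half_sqrt)

lemma Holder_inequality_integral:
  fixes f g :: "'a \<Rightarrow> real"
  assumes pq: "p > 1" "q > 1" "1 / p + 1 / q = 1"
    and [measurable]: "f \<in> borel_measurable M" "g \<in> borel_measurable M"
    and f: "integrable M (\<lambda>x. \<bar>f x\<bar> powr p)" and g: "integrable M (\<lambda>x. \<bar>g x\<bar> powr q)"
  shows "integrable M (\<lambda>x. f x * g x)"
    and "(\<integral>x. \<bar>f x * g x\<bar> \<partial>M) \<le> Lp_norm_on M p f * Lp_norm_on M q g"
proof -
  have Young: "a * b \<le> a powr p / p + b powr q / q" if "a \<ge> 0" "b \<ge> 0" for a b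
    using Youngs_inequality[OF pq that] .
  show int: "integrable M (\<lambda>x. f x * g x)"
    by (rule Bochner_Integration.integrable_bound[where f = "\<lambda>x. \<bar>f x\<bar> powr p / p + \<bar>g x\<bar> powr q / q"])
       (use f g in \<open>auto simp: abs_mult intro!: AE_I2 order_trans[OF Young abs_ge_self]\<close>)
  define A where "A = (\<integral>x. \<bar>f x\<bar> powr p \<partial>M)"
  define B where "B = (\<integral>x. \<bar>g x\<bar> powr q \<partial>M)"
  have norms: "Lp_norm_on M p f = A powr (1 / p)" "Lp_norm_on M q g = B powr (1 / q)"
    by (simp_all add: Lp_norm_on_def A_def B_def)
  show "(\<integral>x. \<bar>f x * g x\<bar> \<partial>M) \<le> Lp_norm_on M p f * Lp_norm_on M q g"
  proof (cases "A = 0 \<or> B = 0")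
    case True
    then have "AE x in M. \<bar>f x\<bar> powr p = 0 \<or> \<bar>g x\<bar> powr q = 0"
      using f g by (auto simp: A_def B_def integral_nonneg_eq_0_iff_AE elim: eventually_mono)
    then have "AE x in M. \<bar>f x * g x\<bar> = 0"
      by eventually_elim (auto simp: abs_mult)
    then have "(\<integral>x. \<bar>f x * g x\<bar> \<partial>M) = 0"
      by (simp add: integral_eq_zero_AE)
    then show ?thesis
      by (simp add: Lp_norm_on_nonneg)
  next
    case False
    then have "A > 0" "B > 0"
      by (auto simp: A_def B_def less_le integral_nonneg_AE)
    define a b where "a = A powr (1 / p)" and "b = B powr (1 / q)"
    have "a > 0" "b > 0" "a powr p = A" "b powr q = B"
      using \<open>A > 0\<close> \<open>B > 0\<close> pq by (simp_all add: a_def b_def powr_powr)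
    have pointwise: "\<bar>f x * g x\<bar> / (a * b) \<le> \<bar>f x\<bar> powr p / (A * p) + \<bar>g x\<bar> powr q / (B * q)" for x
      using Young[of "\<bar>f x\<bar> / a" "\<bar>g x\<bar> / b"] \<open>a > 0\<close> \<open>b > 0\<close> \<open>a powr p = A\<close> \<open>b powr q = B\<close>
      by (simp add: abs_mult powr_divide)
    have "(\<integral>x. \<bar>f x * g x\<bar> \<partial>M) / (a * b) = (\<integral>x. \<bar>f x * g x\<bar> / (a * b) \<partial>M)"
      by simp
    also have "\<dots> \<le> (\<integral>x. \<bar>f x\<bar> powr p / (A * p) + \<bar>g x\<bar> powr q / (B * q) \<partial>M)"
      by (intro integral_mono pointwise) (use int f g in auto)
    also have "\<dots> = 1 / p + 1 / q"
      using f g \<open>A > 0\<close> \<open>B > 0\<close> by (simp add: A_def B_def)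
    finally show ?thesis
      using \<open>a > 0\<close> \<open>b > 0\<close> pq(3) by (simp add: norms a_def b_def pos_divide_le_eq)
  qed
qed

lemma Cauchy_Schwarz_integral:
  fixes f g :: "'a \<Rightarrow> real"
  assumes "square_integrable M f" "square_integrable M g"
  shows "integrable M (\<lambda>x. f x * g x)"
    and "(\<integral>x. \<bar>f x * g x\<bar> \<partial>M) \<le> sqrt (\<integral>x. (f x)\<^sup>2 \<partial>M) * sqrt (\<integral>x. (g x)\<^sup>2 \<partial>M)"
  using Holder_inequality_integral[of 2 2 f M g] assms
  by (simp_all add: square_integrable_def Lp_norm_on_two)

text \<open>Cauchy-Schwarz for \<open>(h w) \<cdot> w\<close>, then Hoelder with exponents 3/2, 3 for \<open>h\<^sup>2 \<cdot> w\<^sup>2\<close>.\<close>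

lemma abs_integral_mult_square_le:
  fixes h w :: "'a \<Rightarrow> real"
  assumes [measurable]: "h \<in> borel_measurable M" "w \<in> borel_measurable M"
    and h3: "integrable M (\<lambda>x. \<bar>h x\<bar> powr 3)" and w6: "integrable M (\<lambda>x. \<bar>w x\<bar> powr 6)"
    and w2: "integrable M (\<lambda>x. (w x)\<^sup>2)"
  shows "integrable M (\<lambda>x. h x * (w x)\<^sup>2)"
    and "\<bar>\<integral>x. h x * (w x)\<^sup>2 \<partial>M\<bar> \<le> Lp_norm_on M 3 h * Lp_norm_on M 6 w * Lp_norm_on M 2 w"
proof -
  have sq_powr: "y\<^sup>2 powr r = \<bar>y\<bar> powr (2 * r)" for y r :: real
  proof -
    have sq: "y\<^sup>2 = \<bar>y\<bar> powr 2"
      by simp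
    show ?thesis
      unfolding sq by (rule powr_powr)
  qed
  have Lp_sq: "Lp_norm_on M r (\<lambda>x. (f x)\<^sup>2) = (Lp_norm_on M (2 * r) f)\<^sup>2" if "r > 0" for r and f :: "'a \<Rightarrow> real"
    using that by (simp add: Lp_norm_on_def sq_powr powr_powr flip: powr_numeral)
  have "integrable M (\<lambda>x. (h x)\<^sup>2 * (w x)\<^sup>2)"
    and hw: "(\<integral>x. \<bar>(h x)\<^sup>2 * (w x)\<^sup>2\<bar> \<partial>M) \<le> (Lp_norm_on M 3 h)\<^sup>2 * (Lp_norm_on M 6 w)\<^sup>2"
    using Holder_inequality_integral[of "3/2" 3 "\<lambda>x. (h x)\<^sup>2" M "\<lambda>x. (w x)\<^sup>2"] h3 w6
    by (simp_all add: sq_powr Lp_sq)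
  then have "square_integrable M (\<lambda>x. h x * w x)" "square_integrable M w"
    using w2 by (simp_all add: square_integrable_def power_mult_distrib)
  from Cauchy_Schwarz_integral[OF this] have
    "integrable M (\<lambda>x. h x * w x * w x)"
    "(\<integral>x. \<bar>h x * w x * w x\<bar> \<partial>M) \<le> sqrt (\<integral>x. (h x * w x)\<^sup>2 \<partial>M) * Lp_norm_on M 2 w"
    by (simp_all add: Lp_norm_on_two)
  then show "integrable M (\<lambda>x. h x * (w x)\<^sup>2)"
    by (simp add: power2_eq_square mult.assoc)
  have "\<bar>\<integral>x. h x * (w x)\<^sup>2 \<partial>M\<bar> \<le> (\<integral>x. \<bar>h x * w x * w x\<bar> \<partial>M)"
    using integral_abs_bound[of M "\<lambda>x. h x * (w x)\<^sup>2"] by (simp add: power2_eq_square mult.assoc)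
  also have "\<dots> \<le> sqrt (\<integral>x. (h x * w x)\<^sup>2 \<partial>M) * Lp_norm_on M 2 w"
    by fact
  also have "\<dots> \<le> Lp_norm_on M 3 h * Lp_norm_on M 6 w * Lp_norm_on M 2 w"
  proof (intro mult_right_mono Lp_norm_on_nonneg)
    have "sqrt (\<integral>x. (h x * w x)\<^sup>2 \<partial>M) \<le> sqrt ((Lp_norm_on M 3 h)\<^sup>2 * (Lp_norm_on M 6 w)\<^sup>2)"
      using hw by (simp add: power_mult_distrib abs_mult)
    then show "sqrt (\<integral>x. (h x * w x)\<^sup>2 \<partial>M) \<le> Lp_norm_on M 3 h * Lp_norm_on M 6 w"
      by (simp add: real_sqrt_mult Lp_norm_on_nonneg)
  qed
  finally show "\<bar>\<integral>x. h x * (w x)\<^sup>2 \<partial>M\<bar> \<le> Lp_norm_on M 3 h * Lp_norm_on M 6 w * Lp_norm_on M 2 w" .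
qed

section \<open>Continuity of products in L2\<close>

lemma tendsto_L2_inner_ae_bounded:
  fixes G :: "'a \<Rightarrow> 'b::euclidean_space"
  assumes "ae_bounded M G" "\<And>n. square_integrable M (d n)" "square_integrable M d0"
    and lim: "(\<lambda>n. \<integral>x. (norm (d n x - d0 x))\<^sup>2 \<partial>M) \<longlonglongrightarrow> 0"
  shows "(\<lambda>n. \<integral>x. (G x \<bullet> d n x - G x \<bullet> d0 x)\<^sup>2 \<partial>M) \<longlonglongrightarrow> 0"
proof -
  obtain B where "G \<in> borel_measurable M" "AE x in M. norm (G x) \<le> B"
    using assms(1) by (rule ae_boundedE)
  from square_integrable_inner_bounded(2)[OF this square_integrable_diff[OF assms(2,3)]]
  have "(\<integral>x. (G x \<bullet> d n x - G x \<bullet> d0 x)\<^sup>2 \<partial>M) \<le> B\<^sup>2 * (\<integral>x. (norm (d n x - d0 x))\<^sup>2 \<partial>M)" for n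
    by (simp add: inner_diff_right)
  then show ?thesis
    by (intro tendsto_sandwich[OF _ _ tendsto_const tendsto_mult_right_zero[OF lim, where c = "B\<^sup>2"]]) auto
qed

lemma abs_integral_mult_diff_le:
  fixes f g f0 g0 :: "'a \<Rightarrow> real"
  assumes f: "square_integrable M f" "square_integrable M f0"
    and g: "square_integrable M g" "square_integrable M g0"
  shows "\<bar>(\<integral>x. f x * g x \<partial>M) - (\<integral>x. f0 x * g0 x \<partial>M)\<bar> \<le>
    sqrt (\<integral>x. (f x - f0 x)\<^sup>2 \<partial>M) * sqrt (\<integral>x. (g x - g0 x)\<^sup>2 \<partial>M) +
    sqrt (\<integral>x. (f x - f0 x)\<^sup>2 \<partial>M) * sqrt (\<integral>x. (g0 x)\<^sup>2 \<partial>M) +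
    sqrt (\<integral>x. (f0 x)\<^sup>2 \<partial>M) * sqrt (\<integral>x. (g x - g0 x)\<^sup>2 \<partial>M)"
proof -
  define u where "u x = f x - f0 x" for x
  define v where "v x = g x - g0 x" for x
  have u: "square_integrable M u" and v: "square_integrable M v"
    unfolding u_def v_def using f g by (simp_all add: square_integrable_diff)
  have abs_triangle3: "\<bar>p + q + r\<bar> \<le> \<bar>p\<bar> + \<bar>q\<bar> + \<bar>r\<bar>" for p q r :: real
    by (rule order_trans[OF abs_triangle_ineq add_right_mono[OF abs_triangle_ineq]])
  note uv = Cauchy_Schwarz_integral[OF u v]
    and ug = Cauchy_Schwarz_integral[OF u g(2)]
    and fv = Cauchy_Schwarz_integral[OF f(2) v]
  have "(\<integral>x. f x * g x \<partial>M) - (\<integral>x. f0 x * g0 x \<partial>M)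
      = (\<integral>x. u x * v x + u x * g0 x + f0 x * v x \<partial>M)"
    using Cauchy_Schwarz_integral(1)[OF f(1) g(1)] Cauchy_Schwarz_integral(1)[OF f(2) g(2)]
    by (simp add: u_def v_def algebra_simps flip: Bochner_Integration.integral_diff)
  also have "\<dots> = (\<integral>x. u x * v x \<partial>M) + (\<integral>x. u x * g0 x \<partial>M) + (\<integral>x. f0 x * v x \<partial>M)"
    using uv(1) ug(1) fv(1) by simp
  finally have "\<bar>(\<integral>x. f x * g x \<partial>M) - (\<integral>x. f0 x * g0 x \<partial>M)\<bar>
      \<le> \<bar>\<integral>x. u x * v x \<partial>M\<bar> + \<bar>\<integral>x. u x * g0 x \<partial>M\<bar> + \<bar>\<integral>x. f0 x * v x \<partial>M\<bar>"
    by (simp only: abs_triangle3)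
  also have "\<dots> \<le> (\<integral>x. \<bar>u x * v x\<bar> \<partial>M) + (\<integral>x. \<bar>u x * g0 x\<bar> \<partial>M) + (\<integral>x. \<bar>f0 x * v x\<bar> \<partial>M)"
    using integral_abs_bound[of M "\<lambda>x. u x * v x"] integral_abs_bound[of M "\<lambda>x. u x * g0 x"]
      integral_abs_bound[of M "\<lambda>x. f0 x * v x"]
    by (simp add: add_mono)
  also have "\<dots> \<le> sqrt (\<integral>x. (u x)\<^sup>2 \<partial>M) * sqrt (\<integral>x. (v x)\<^sup>2 \<partial>M) +
      sqrt (\<integral>x. (u x)\<^sup>2 \<partial>M) * sqrt (\<integral>x. (g0 x)\<^sup>2 \<partial>M) +
      sqrt (\<integral>x. (f0 x)\<^sup>2 \<partial>M) * sqrt (\<integral>x. (v x)\<^sup>2 \<partial>M)"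
    using uv(2) ug(2) fv(2) by simp
  finally show ?thesis
    by (simp only: u_def v_def)
qed

lemma tendsto_integral_mult_L2:
  fixes f g :: "nat \<Rightarrow> 'a \<Rightarrow> real"
  assumes f: "\<And>n. square_integrable M (f n)" "square_integrable M f0"
    and g: "\<And>n. square_integrable M (g n)" "square_integrable M g0"
    and lim_f: "(\<lambda>n. \<integral>x. (f n x - f0 x)\<^sup>2 \<partial>M) \<longlonglongrightarrow> 0"
    and lim_g: "(\<lambda>n. \<integral>x. (g n x - g0 x)\<^sup>2 \<partial>M) \<longlonglongrightarrow> 0"
  shows "(\<lambda>n. \<integral>x. f n x * g n x \<partial>M) \<longlonglongrightarrow> (\<integral>x. f0 x * g0 x \<partial>M)"
proof -
  define a where "a n = sqrt (\<integral>x. (f n x - f0 x)\<^sup>2 \<partial>M)" for n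
  define b where "b n = sqrt (\<integral>x. (g n x - g0 x)\<^sup>2 \<partial>M)" for n
  have "a \<longlonglongrightarrow> 0" "b \<longlonglongrightarrow> 0"
    using tendsto_real_sqrt[OF lim_f] tendsto_real_sqrt[OF lim_g] by (simp_all add: a_def[abs_def] b_def[abs_def])
  then have "(\<lambda>n. a n * b n + a n * sqrt (\<integral>x. (g0 x)\<^sup>2 \<partial>M) + sqrt (\<integral>x. (f0 x)\<^sup>2 \<partial>M) * b n) \<longlonglongrightarrow> 0"
    by (intro tendsto_add_zero tendsto_mult_zero tendsto_mult_left_zero tendsto_mult_right_zero)
  then have "(\<lambda>n. (\<integral>x. f n x * g n x \<partial>M) - (\<integral>x. f0 x * g0 x \<partial>M)) \<longlonglongrightarrow> 0"
    by (rule Lim_null_comparison[rotated])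
       (simp add: a_def b_def abs_integral_mult_diff_le[OF f(1,2) g(1,2)])
  then show ?thesis
    by (rule LIM_zero_cancel)
qed

lemma set_integral_eq_integral_restrict_space:
  fixes f :: "'a \<Rightarrow> 'b::{banach,second_countable_topology}"
  assumes "\<Omega> \<in> sets M"
  shows "(LINT x:\<Omega>|M. f x) = (\<integral>x. f x \<partial>restrict_space M \<Omega>)"
  using assms by (simp add: set_lebesgue_integral_def integral_restrict_space)

lemma set_integrable_iff_integrable_restrict_space:
  fixes f :: "'a \<Rightarrow> 'b::{banach,second_countable_topology}"
  assumes "\<Omega> \<in> sets M"
  shows "set_integrable M \<Omega> f \<longleftrightarrow> integrable (restrict_space M \<Omega>) f"
  using assms by (simp add: set_integrable_def integrable_restrict_space)

lemma open_bounded_lebesgue_on: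
  assumes "open \<Omega>" "bounded \<Omega>"
  shows "\<Omega> \<in> sets lebesgue" "finite_measure (lebesgue_on \<Omega>)"
  using lmeasurable_open[OF assms(2,1)] by (simp_all add: fmeasurableD finite_measure_lebesgue_on)

lemma L2_iff_square_integrable:
  "\<Omega> \<in> sets lebesgue \<Longrightarrow> L2 \<Omega> f \<longleftrightarrow> square_integrable (lebesgue_on \<Omega>) f"
  by (simp add: L2_def square_integrable_def set_integrable_iff_integrable_restrict_space)

lemma ess_bounded_iff_ae_bounded:
  "\<Omega> \<in> sets lebesgue \<Longrightarrow> ess_bounded \<Omega> f \<longleftrightarrow> ae_bounded (lebesgue_on \<Omega>) f"
  by (simp add: ess_bounded_def ae_bounded_def AE_restrict_space_iff)

lemma Lp_norm_eq_Lp_norm_on: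
  "\<Omega> \<in> sets lebesgue \<Longrightarrow> Lp_norm \<Omega> p f = Lp_norm_on (lebesgue_on \<Omega>) p f"
  by (simp add: Lp_norm_def Lp_norm_on_def set_integral_eq_integral_restrict_space)

lemma Lp_norm_nonneg: "Lp_norm \<Omega> p f \<ge> 0"
  by (simp add: Lp_norm_def)

lemma Lp_norm_two_squared: "(Lp_norm \<Omega> 2 f)\<^sup>2 = (LINT x:\<Omega>|lebesgue. (norm (f x))\<^sup>2)"
proof -
  have "(LINT x:\<Omega>|lebesgue. (norm (f x))\<^sup>2) \<ge> 0"
    by (simp add: set_lebesgue_integral_def)
  then show ?thesis
    by (simp add: Lp_norm_def powr_half_sqrt)
qed

section \<open>The bilinear form\<close>

lemma form_A_self_eq:
  "form_A \<Omega> \<tau> G\<psi> w Gw w Gw = (Lp_norm \<Omega> 2 w)\<^sup>2 + \<tau> * ((Lp_norm \<Omega> 2 Gw)\<^sup>2 + form_b \<Omega> G\<psi> w Gw)"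
proof -
  have "L2_inner \<Omega> w w = (Lp_norm \<Omega> 2 w)\<^sup>2"
    unfolding Lp_norm_two_squared L2_inner_def by (simp add: power2_eq_square)
  moreover have "form_a \<Omega> Gw Gw = (Lp_norm \<Omega> 2 Gw)\<^sup>2"
    unfolding Lp_norm_two_squared form_a_def by (simp add: power2_norm_eq_inner)
  ultimately show ?thesis
    by (simp add: form_A_def)
qed

lemma W2inf_lap_ae_bounded:
  assumes "\<Omega> \<in> sets lebesgue" "W2inf \<Omega> \<psi> G\<psi> H\<psi>"
  shows "ae_bounded (lebesgue_on \<Omega>) (lap H\<psi>)"
proof -
  have "ae_bounded (lebesgue_on \<Omega>) (\<lambda>x. H\<psi> x i \<bullet> i)" if "i \<in> Basis" for i
    using assms that
    by (intro ae_bounded_bilinear[OF bounded_bilinear_inner] ae_bounded_const)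
       (simp add: W2inf_def ess_bounded_iff_ae_bounded)
  then show ?thesis
    unfolding lap_def[abs_def] by (intro ae_bounded_sum) auto
qed

lemma test_fun_ae_bounded:
  assumes "bounded \<Omega>" "\<Omega> \<in> sets lebesgue" "test_fun \<Omega> \<phi>"
  shows "ae_bounded (lebesgue_on \<Omega>) \<phi>" "ae_bounded (lebesgue_on \<Omega>) (grad \<phi>)"
  using assms C_inf_continuous_on continuous_on_grad
  by (auto simp: test_fun_def intro!: ae_bounded_lebesgue_on_continuous intro: continuous_on_subset)

lemma form_b_test_fun_self_eq:
  assumes "open \<Omega>" "bounded \<Omega>" and \<psi>: "W2inf \<Omega> \<psi> G\<psi> H\<psi>" and \<phi>: "test_fun \<Omega> \<phi>"
  shows "form_b \<Omega> G\<psi> \<phi> (grad \<phi>) = - (LINT x:\<Omega>|lebesgue. lap H\<psi> x * (\<phi> x)\<^sup>2) / 2"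
proof -
  define M where "M = lebesgue_on \<Omega>"
  have \<Omega>: "\<Omega> \<in> sets lebesgue" "finite_measure M"
    using open_bounded_lebesgue_on[OF assms(1,2)] by (simp_all add: M_def)
  note LINT_M = set_integral_eq_integral_restrict_space[OF \<Omega>(1), folded M_def]
  define \<phi>2 where "\<phi>2 x = \<phi> x * \<phi> x" for x
  have \<phi>2: "test_fun \<Omega> \<phi>2"
    unfolding \<phi>2_def[abs_def] using \<phi> by (rule test_fun_mult_self)
  have bounded: "ae_bounded M G\<psi>" "ae_bounded M \<phi>" "ae_bounded M (grad \<phi>2)"
    "\<And>i. i \<in> Basis \<Longrightarrow> ae_bounded M (\<lambda>x. H\<psi> x i)"
    using \<psi> test_fun_ae_bounded[OF assms(2) \<Omega>(1)] \<phi> \<phi>2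
    by (auto simp: M_def W2inf_def ess_bounded_iff_ae_bounded[OF \<Omega>(1)])
  have int_G: "integrable M (\<lambda>x. (G\<psi> x \<bullet> i) * (grad \<phi>2 x \<bullet> i))" for i
    by (intro ae_bounded_integrable[OF \<Omega>(2)] ae_bounded_bilinear[OF bounded_bilinear_mult]
        ae_bounded_bilinear[OF bounded_bilinear_inner] bounded ae_bounded_const)
  have int_H: "integrable M (\<lambda>x. (H\<psi> x i \<bullet> i) * \<phi>2 x)" if "i \<in> Basis" for i
    unfolding \<phi>2_def
    by (intro ae_bounded_integrable[OF \<Omega>(2)] ae_bounded_bilinear[OF bounded_bilinear_mult]
        ae_bounded_bilinear[OF bounded_bilinear_inner] bounded that ae_bounded_const)
  have weak: "(\<integral>x. (G\<psi> x \<bullet> i) * (grad \<phi>2 x \<bullet> i) \<partial>M) = - (\<integral>x. (H\<psi> x i \<bullet> i) * \<phi>2 x \<partial>M)"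
    if "i \<in> Basis" for i
    using \<psi> \<phi>2 that by (auto simp: W2inf_def weak_grad_def LINT_M)
  have "(\<phi> x *\<^sub>R G\<psi> x) \<bullet> grad \<phi> x = (\<Sum>i\<in>Basis. (G\<psi> x \<bullet> i) * (grad \<phi>2 x \<bullet> i)) / 2" for x
    using \<phi> unfolding \<phi>2_def[abs_def] test_fun_def by (blast intro: scaleR_inner_grad_eq_half_grad_square)
  then have "form_b \<Omega> G\<psi> \<phi> (grad \<phi>) = (\<integral>x. (\<Sum>i\<in>Basis. (G\<psi> x \<bullet> i) * (grad \<phi>2 x \<bullet> i)) \<partial>M) / 2"
    unfolding form_b_def LINT_M by (simp only: integral_divide_zero)
  also have "\<dots> = (\<Sum>i\<in>Basis. - (\<integral>x. (H\<psi> x i \<bullet> i) * \<phi>2 x \<partial>M)) / 2"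
    using int_G weak by (simp add: Bochner_Integration.integral_sum)
  also have "\<dots> = - (\<integral>x. lap H\<psi> x * \<phi>2 x \<partial>M) / 2"
    using int_H by (simp add: lap_def sum_distrib_right sum_negf Bochner_Integration.integral_sum)
  finally show ?thesis
    by (simp add: LINT_M \<phi>2_def power2_eq_square)
qed

lemma form_b_self_eq:
  assumes "open \<Omega>" "bounded \<Omega>" and w: "H10 \<Omega> w Gw" and \<psi>: "W2inf \<Omega> \<psi> G\<psi> H\<psi>"
  shows "form_b \<Omega> G\<psi> w Gw = - (LINT x:\<Omega>|lebesgue. lap H\<psi> x * (w x)\<^sup>2) / 2"
proof -
  define M where "M = lebesgue_on \<Omega>"
  have \<Omega>: "\<Omega> \<in> sets lebesgue" "finite_measure M"
    using open_bounded_lebesgue_on[OF assms(1,2)] by (simp_all add: M_def)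
  note LINT_M = set_integral_eq_integral_restrict_space[OF \<Omega>(1), folded M_def]
  obtain \<phi> where \<phi>: "\<And>n. test_fun \<Omega> (\<phi> n)"
    and lim_\<phi>: "(\<lambda>n. \<integral>x. (\<phi> n x - w x)\<^sup>2 \<partial>M) \<longlonglongrightarrow> 0"
    and lim_grad: "(\<lambda>n. \<integral>x. (norm (grad (\<phi> n) x - Gw x))\<^sup>2 \<partial>M) \<longlonglongrightarrow> 0"
    and w_L2: "square_integrable M w" "square_integrable M Gw"
    using w by (auto simp: H10_def LINT_M M_def L2_iff_square_integrable[OF \<Omega>(1)])
  have \<phi>_L2: "square_integrable M (\<phi> n)" "square_integrable M (grad (\<phi> n))" for n
    using test_fun_ae_bounded[OF assms(2) \<Omega>(1) \<phi>] \<Omega>(2)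
    by (auto simp: M_def intro: ae_bounded_square_integrable)
  have G: "ae_bounded M G\<psi>" and lap: "ae_bounded M (lap H\<psi>)"
    using \<psi> W2inf_lap_ae_bounded[OF \<Omega>(1) \<psi>]
    by (simp_all add: M_def W2inf_def ess_bounded_iff_ae_bounded[OF \<Omega>(1)])
  have "(\<lambda>n. \<integral>x. \<phi> n x * (G\<psi> x \<bullet> grad (\<phi> n) x) \<partial>M) \<longlonglongrightarrow> (\<integral>x. w x * (G\<psi> x \<bullet> Gw x) \<partial>M)"
    using \<phi>_L2 w_L2 lim_\<phi> tendsto_L2_inner_ae_bounded[OF G \<phi>_L2(2) w_L2(2) lim_grad]
    by (intro tendsto_integral_mult_L2 square_integrable_inner_ae_bounded[OF G])
  then have lim_b: "(\<lambda>n. form_b \<Omega> G\<psi> (\<phi> n) (grad (\<phi> n))) \<longlonglongrightarrow> form_b \<Omega> G\<psi> w Gw"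
    by (simp add: form_b_def LINT_M)
  have "(\<lambda>n. \<integral>x. (lap H\<psi> x * \<phi> n x) * \<phi> n x \<partial>M) \<longlonglongrightarrow> (\<integral>x. (lap H\<psi> x * w x) * w x \<partial>M)"
    using \<phi>_L2 w_L2 lim_\<phi>
      square_integrable_inner_ae_bounded[OF lap] tendsto_L2_inner_ae_bounded[OF lap \<phi>_L2(1) w_L2(1)]
    by (intro tendsto_integral_mult_L2) simp_all
  then have "(\<lambda>n. form_b \<Omega> G\<psi> (\<phi> n) (grad (\<phi> n))) \<longlonglongrightarrow> - (LINT x:\<Omega>|lebesgue. lap H\<psi> x * (w x)\<^sup>2) / 2"
    by (simp add: form_b_test_fun_self_eq[OF assms(1,2) \<psi> \<phi>] LINT_M power2_eq_square mult.assoc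
        tendsto_divide tendsto_minus)
  with lim_b show ?thesis
    by (rule LIMSEQ_unique)
qed

lemma abs_set_integral_lap_square_le:
  assumes "open \<Omega>" "bounded \<Omega>" and \<psi>: "W2inf \<Omega> \<psi> G\<psi> H\<psi>"
    and w: "L2 \<Omega> w" "set_integrable lebesgue \<Omega> (\<lambda>x. \<bar>w x\<bar> powr 6)"
  shows "\<bar>LINT x:\<Omega>|lebesgue. lap H\<psi> x * (w x)\<^sup>2\<bar> \<le>
    Lp_norm \<Omega> 3 (lap H\<psi>) * Lp_norm \<Omega> 6 w * Lp_norm \<Omega> 2 w"
proof -
  define M where "M = lebesgue_on \<Omega>"
  have \<Omega>: "\<Omega> \<in> sets lebesgue" "finite_measure M"
    using open_bounded_lebesgue_on[OF assms(1,2)] by (simp_all add: M_def)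
  have lap: "ae_bounded M (lap H\<psi>)"
    using W2inf_lap_ae_bounded[OF \<Omega>(1) \<psi>] by (simp add: M_def)
  then have "lap H\<psi> \<in> borel_measurable M" "integrable M (\<lambda>x. \<bar>lap H\<psi> x\<bar> powr 3)"
    using ae_bounded_integrable[OF \<Omega>(2) ae_bounded_powr_norm[OF lap, of 3]]
    by (simp_all add: ae_bounded_def)
  moreover have "w \<in> borel_measurable M" "integrable M (\<lambda>x. (w x)\<^sup>2)"
    "integrable M (\<lambda>x. \<bar>w x\<bar> powr 6)"
    using w by (simp_all add: M_def L2_iff_square_integrable[OF \<Omega>(1)] square_integrable_def
        set_integrable_iff_integrable_restrict_space[OF \<Omega>(1)])
  ultimately show ?thesis
    using abs_integral_mult_square_le(2)[of "lap H\<psi>" M w]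
    by (simp add: M_def set_integral_eq_integral_restrict_space[OF \<Omega>(1)] Lp_norm_eq_Lp_norm_on[OF \<Omega>(1)])
qed

lemma abs_set_integral_lap_square_le_Sobolev:
  assumes "open \<Omega>" "bounded \<Omega>" "W2inf \<Omega> \<psi> G\<psi> H\<psi>" "H10 \<Omega> w Gw"
    and "set_integrable lebesgue \<Omega> (\<lambda>x. \<bar>w x\<bar> powr 6)" "Lp_norm \<Omega> 6 w \<le> C * Lp_norm \<Omega> 2 Gw"
  shows "\<bar>LINT x:\<Omega>|lebesgue. lap H\<psi> x * (w x)\<^sup>2\<bar> \<le>
    Lp_norm \<Omega> 3 (lap H\<psi>) * \<bar>C\<bar> * Lp_norm \<Omega> 2 w * Lp_norm \<Omega> 2 Gw"
proof -
  have "L2 \<Omega> w"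
    using assms(4) by (simp add: H10_def)
  then have "\<bar>LINT x:\<Omega>|lebesgue. lap H\<psi> x * (w x)\<^sup>2\<bar> \<le>
      Lp_norm \<Omega> 3 (lap H\<psi>) * Lp_norm \<Omega> 6 w * Lp_norm \<Omega> 2 w"
    by (rule abs_set_integral_lap_square_le[OF assms(1-3) _ assms(5)])
  also have "\<dots> \<le> Lp_norm \<Omega> 3 (lap H\<psi>) * (\<bar>C\<bar> * Lp_norm \<Omega> 2 Gw) * Lp_norm \<Omega> 2 w"
    using assms(6) abs_ge_self[of C] Lp_norm_nonneg[of \<Omega> 2 Gw]
    by (intro mult_right_mono mult_left_mono Lp_norm_nonneg) (meson mult_right_mono order_trans)
  finally show ?thesis
    by (simp add: mult_ac)
qed

lemma set_integral_mult_square_nonpos: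
  fixes f g :: "'a::euclidean_space \<Rightarrow> real"
  assumes "AE x in lebesgue. x \<in> \<Omega> \<longrightarrow> f x \<le> 0" "\<Omega> \<in> sets lebesgue"
  shows "(LINT x:\<Omega>|lebesgue. f x * (g x)\<^sup>2) \<le> 0"
proof -
  have "AE x in lebesgue_on \<Omega>. - (f x * (g x)\<^sup>2) \<ge> 0"
    using assms by (auto simp: AE_restrict_space_iff elim!: eventually_mono intro: mult_nonpos_nonneg)
  then show ?thesis
    using integral_nonneg_AE[of "\<lambda>x. - (f x * (g x)\<^sup>2)" "lebesgue_on \<Omega>"]
    by (simp add: set_integral_eq_integral_restrict_space[OF assms(2)])
qed

lemma mixed_term_le_sum_squares:
  fixes a b K \<tau> :: real
  assumes "\<tau> > 0" "\<tau> * K\<^sup>2 < 4"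
  shows "\<tau> * K * a * b \<le> a\<^sup>2 + \<tau> * b\<^sup>2"
proof -
  have "a\<^sup>2 + \<tau> * b\<^sup>2 - \<tau> * K * a * b = (a - \<tau> * K * b / 2)\<^sup>2 + \<tau> * b\<^sup>2 * (1 - \<tau> * K\<^sup>2 / 4)"
    by (simp add: power2_eq_square field_simps)
  moreover have "\<tau> * b\<^sup>2 * (1 - \<tau> * K\<^sup>2 / 4) \<ge> 0"
    using assms by simp
  ultimately show ?thesis
    using zero_le_power2[of "a - \<tau> * K * b / 2"] by linarith
qed

theorem lemma5:
  fixes \<Omega> :: "'a::euclidean_space set"
    and \<tau> :: real and w :: "'a \<Rightarrow> real" and Gw :: "'a \<Rightarrow> 'a"
    and \<psi> :: "'a \<Rightarrow> real" and G\<psi> :: "'a \<Rightarrow> 'a" and H\<psi> :: "'a \<Rightarrow> 'a \<Rightarrow> 'a"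
    and C_S :: real
  assumes "DIM('a) \<le> 3"
    and "bounded_polytopal_domain \<Omega>" and "lipschitz_boundary \<Omega>"
    and "\<tau> > 0"
    and "H10 \<Omega> w Gw"
    and "W2inf \<Omega> \<psi> G\<psi> H\<psi>"
  shows "((AE x in lebesgue. x \<in> \<Omega> \<longrightarrow> lap H\<psi> x \<le> 0) \<longrightarrow>
            form_A \<Omega> \<tau> G\<psi> w Gw w Gw \<ge> (Lp_norm \<Omega> 2 w)\<^sup>2 + \<tau> * (Lp_norm \<Omega> 2 Gw)\<^sup>2)
       \<and> ((\<forall>v Gv. H10 \<Omega> v Gv \<longrightarrow> set_integrable lebesgue \<Omega> (\<lambda>x. \<bar>v x\<bar> powr 6) \<and>
                   Lp_norm \<Omega> 6 v \<le> C_S * Lp_norm \<Omega> 2 Gv) \<longrightarrow>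
          \<tau> * C_S\<^sup>2 * (Lp_norm \<Omega> 3 (lap H\<psi>))\<^sup>2 < 4 \<longrightarrow>
            form_A \<Omega> \<tau> G\<psi> w Gw w Gw \<ge> (1/2) * (Lp_norm \<Omega> 2 w)\<^sup>2 + (\<tau>/2) * (Lp_norm \<Omega> 2 Gw)\<^sup>2)"
proof -
  \<comment> \<open>The dimension bound and the Lipschitz boundary matter only for the Sobolev inequality,
    which enters as a hypothesis of the second part.\<close>
  have \<Omega>: "open \<Omega>" "bounded \<Omega>"
    using assms(2) by (simp_all add: bounded_polytopal_domain_def)
  define I where "I = (LINT x:\<Omega>|lebesgue. lap H\<psi> x * (w x)\<^sup>2)"
  have A: "form_A \<Omega> \<tau> G\<psi> w Gw w Gw = (Lp_norm \<Omega> 2 w)\<^sup>2 + \<tau> * (Lp_norm \<Omega> 2 Gw)\<^sup>2 - \<tau> * I / 2"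
    using form_b_self_eq[OF \<Omega> assms(5,6)] by (simp add: form_A_self_eq I_def algebra_simps)
  show ?thesis
  proof (intro conjI impI)
    assume "AE x in lebesgue. x \<in> \<Omega> \<longrightarrow> lap H\<psi> x \<le> 0"
    then have "I \<le> 0"
      unfolding I_def using open_bounded_lebesgue_on(1)[OF \<Omega>] by (rule set_integral_mult_square_nonpos)
    then show "form_A \<Omega> \<tau> G\<psi> w Gw w Gw \<ge> (Lp_norm \<Omega> 2 w)\<^sup>2 + \<tau> * (Lp_norm \<Omega> 2 Gw)\<^sup>2"
      using A \<open>\<tau> > 0\<close> by (simp add: mult_nonneg_nonpos)
  next
    assume Sobolev: "\<forall>v Gv. H10 \<Omega> v Gv \<longrightarrow> set_integrable lebesgue \<Omega> (\<lambda>x. \<bar>v x\<bar> powr 6) \<and>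
                   Lp_norm \<Omega> 6 v \<le> C_S * Lp_norm \<Omega> 2 Gv"
      and small: "\<tau> * C_S\<^sup>2 * (Lp_norm \<Omega> 3 (lap H\<psi>))\<^sup>2 < 4"
    define K where "K = Lp_norm \<Omega> 3 (lap H\<psi>) * \<bar>C_S\<bar>"
    have "I \<le> K * Lp_norm \<Omega> 2 w * Lp_norm \<Omega> 2 Gw"
      using abs_set_integral_lap_square_le_Sobolev[OF \<Omega> assms(6,5)] Sobolev assms(5)
      unfolding I_def K_def by fastforce
    then have "\<tau> * I \<le> \<tau> * K * Lp_norm \<Omega> 2 w * Lp_norm \<Omega> 2 Gw"
      using \<open>\<tau> > 0\<close> by (simp add: mult.assoc)
    moreover have "\<tau> * K * Lp_norm \<Omega> 2 w * Lp_norm \<Omega> 2 Gw \<le> (Lp_norm \<Omega> 2 w)\<^sup>2 + \<tau> * (Lp_norm \<Omega> 2 Gw)\<^sup>2"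
      using small \<open>\<tau> > 0\<close> by (intro mixed_term_le_sum_squares) (simp_all add: K_def power_mult_distrib mult_ac)
    ultimately show "form_A \<Omega> \<tau> G\<psi> w Gw w Gw \<ge> (1/2) * (Lp_norm \<Omega> 2 w)\<^sup>2 + (\<tau>/2) * (Lp_norm \<Omega> 2 Gw)\<^sup>2"
      unfolding A by linarith
  qed
qed

end
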